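(* For any $n\in\mathbb{Z}$, the group $\langle a,b\mid aba=ba^{n+1}b\rangle$ is isomorphic to the braid group $\mathbb{B}_3$ on three strands.
   Context: $\mathbb{B}_3=\langle x,y\mid xyx=yxy\rangle$ is the Artin braid group on three strands. *)

theory Defs
  imports "HOL-Algebra.Group"
begin

text \<open>Words in a free group: a letter is a pair (generator, inverted?).\<close>
type_synonym 'a fword = "('a \<times> bool) list"

definition word_inv :: "'a fword \<Rightarrow> 'a fword" where
  "word_inv w = rev (map (\<lambda>(x, e). (x, \<not> e)) w)"

definition gen_pow :: "'a \<Rightarrow> int \<Rightarrow> 'a fword" where
  "gen_pow x k = (if 0 \<le> k then replicate (nat k) (x, False) else replicate (nat (- k)) (x, True))"

definition gen :: "'a \<Rightarrow> 'a fword" where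
  "gen x = [(x, False)]"

inductive_set pres_rel :: "'a fword set \<Rightarrow> ('a fword \<times> 'a fword) set" for R where
  cancel: "(xs @ [(x, e), (x, \<not> e)] @ ys, xs @ ys) \<in> pres_rel R"
| relator: "r \<in> R \<Longrightarrow> (xs @ r @ ys, xs @ ys) \<in> pres_rel R"
| refl: "(w, w) \<in> pres_rel R"
| sym: "(u, v) \<in> pres_rel R \<Longrightarrow> (v, u) \<in> pres_rel R"
| trans: "(u, v) \<in> pres_rel R \<Longrightarrow> (v, w) \<in> pres_rel R \<Longrightarrow> (u, w) \<in> pres_rel R"

definition presentation :: "'a fword set \<Rightarrow> 'a fword set monoid" where
  "presentation R =
     \<lparr> carrier = UNIV // pres_rel R,
       mult = (\<lambda>A B. \<Union>u\<in>A. \<Union>v\<in>B. pres_rel R `` {u @ v}),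
       one = pres_rel R `` {[]} \<rparr>"

definition relation :: "'a fword \<Rightarrow> 'a fword \<Rightarrow> 'a fword" where
  "relation u v = u @ word_inv v"

datatype two_gens = GA | GB

definition braid3 :: "two_gens fword set monoid" where
  "braid3 = presentation
     {relation (gen GA @ gen GB @ gen GA) (gen GB @ gen GA @ gen GB)}"

definition G_n :: "int \<Rightarrow> two_gens fword set monoid" where
  "G_n n = presentation
     {relation (gen GA @ gen GB @ gen GA) (gen GB @ gen_pow GA (n + 1) @ gen GB)}"

end

theory Submission
  imports Defs
begin

text \<open>The substitution a \<mapsto> a, b \<mapsto> b a^(-n) turns the relator a b a (b a^(n+1) b)^(-1) into
  a b a^(-n) a a^n b^(-1) a^(-n-1) a^n b^(-1), which after merging adjacent powers of a is the
  braid relator a b a b^(-1) a^(-1) b^(-1); the inverse substitution b \<mapsto> b a^n does the converse.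
  Two mutually inverse substitutions that carry relators to trivial words induce mutually inverse
  homomorphisms between the presented groups.\<close>

abbreviation pres_equiv :: "'a fword \<Rightarrow> 'a fword set \<Rightarrow> 'a fword \<Rightarrow> bool"
    (\<open>_ \<sim>[_] _\<close> [60, 0, 60] 50) where
  "u \<sim>[R] v \<equiv> (u, v) \<in> pres_rel R"

lemma pres_rel_append_left: "u \<sim>[R] v \<Longrightarrow> w @ u \<sim>[R] w @ v"
proof (induction rule: pres_rel.induct)
  case (cancel xs x e ys)
  show ?case using pres_rel.cancel[of "w @ xs" x e ys R] by simp
next
  case (relator r xs ys)
  then show ?case using pres_rel.relator[of r R "w @ xs" ys] by simp
qed (auto intro: pres_rel.intros)

lemma pres_rel_append_right: "u \<sim>[R] v \<Longrightarrow> u @ w \<sim>[R] v @ w"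
proof (induction rule: pres_rel.induct)
  case (cancel xs x e ys)
  show ?case using pres_rel.cancel[of xs x e "ys @ w" R] by simp
next
  case (relator r xs ys)
  then show ?case using pres_rel.relator[of r R xs "ys @ w"] by simp
qed (auto intro: pres_rel.intros)

declare pres_rel.trans [trans]

lemma pres_rel_append: "u \<sim>[R] u' \<Longrightarrow> v \<sim>[R] v' \<Longrightarrow> u @ v \<sim>[R] u' @ v'"
  by (meson pres_rel_append_left pres_rel_append_right pres_rel.trans)

lemma pres_rel_infix: "m \<sim>[R] m' \<Longrightarrow> xs @ m @ ys \<sim>[R] xs @ m' @ ys"
  by (simp add: pres_rel_append pres_rel.refl)

lemma relator_pres_rel_Nil: "r \<in> R \<Longrightarrow> r \<sim>[R] []"
  using pres_rel.relator[of r R "[]" "[]"] by simp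

lemma equiv_pres_rel: "equiv UNIV (pres_rel R)"
  unfolding equiv_def refl_on_def sym_def trans_def by (auto intro: pres_rel.intros)

lemma pres_rel_class_eq: "u \<sim>[R] v \<Longrightarrow> pres_rel R `` {u} = pres_rel R `` {v}"
  by (metis equiv_pres_rel equiv_class_eq)

lemma word_inv_append [simp]: "word_inv (u @ v) = word_inv v @ word_inv u"
  by (simp add: word_inv_def)

lemma word_inv_Cons [simp]: "word_inv ((x, e) # w) = word_inv w @ [(x, \<not> e)]"
  by (simp add: word_inv_def)

lemma word_inv_Nil [simp]: "word_inv [] = []"
  by (simp add: word_inv_def)

lemma word_inv_word_inv [simp]: "word_inv (word_inv w) = w"
  by (induction w) (auto simp: word_inv_def)

lemma append_word_inv_pres_rel_Nil: "w @ word_inv w \<sim>[R] []"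
proof (induction w)
  case Nil
  then show ?case by (simp add: pres_rel.refl)
next
  case (Cons a w)
  obtain x e where a: "a = (x, e)" by fastforce
  have "[a] @ (w @ word_inv w) @ [(x, \<not> e)] \<sim>[R] [a] @ [] @ [(x, \<not> e)]"
    using Cons.IH by (rule pres_rel_infix)
  also have "[a] @ [] @ [(x, \<not> e)] \<sim>[R] []"
    using pres_rel.cancel[of "[]" x e "[]" R] a by simp
  finally have "[a] @ (w @ word_inv w) @ [(x, \<not> e)] \<sim>[R] []" .
  then show ?case using a by simp
qed

lemma word_inv_append_pres_rel_Nil: "word_inv w @ w \<sim>[R] []"
  using append_word_inv_pres_rel_Nil[of "word_inv w" R] by simp

lemma pres_rel_word_inv:
  assumes "w \<sim>[R] v"
  shows "word_inv w \<sim>[R] word_inv v"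
proof -
  have "word_inv w @ [] \<sim>[R] word_inv w @ (v @ word_inv v)"
    by (rule pres_rel_append_left, rule pres_rel.sym, rule append_word_inv_pres_rel_Nil)
  also have "word_inv w @ (v @ word_inv v) \<sim>[R] word_inv w @ (w @ word_inv v)"
    by (rule pres_rel_append_left, rule pres_rel_append_right, rule pres_rel.sym, rule assms)
  also have "word_inv w @ (w @ word_inv v) \<sim>[R] [] @ word_inv v"
    using pres_rel_append_right[OF word_inv_append_pres_rel_Nil] by simp
  finally have "word_inv w @ [] \<sim>[R] [] @ word_inv v" .
  then show ?thesis by simp
qed

definition subst :: "('a \<Rightarrow> 'b fword) \<Rightarrow> 'a fword \<Rightarrow> 'b fword" where
  "subst s w = concat (map (\<lambda>(x, e). if e then word_inv (s x) else s x) w)"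

lemma subst_append [simp]: "subst s (u @ v) = subst s u @ subst s v"
  by (simp add: subst_def)

lemma subst_Nil [simp]: "subst s [] = []"
  by (simp add: subst_def)

lemma subst_Cons [simp]:
  "subst s ((x, e) # w) = (if e then word_inv (s x) else s x) @ subst s w"
  by (simp add: subst_def)

lemma subst_word_inv [simp]: "subst s (word_inv w) = word_inv (subst s w)"
  by (induction w) auto

lemma subst_subst: "subst t (subst s u) = subst (\<lambda>x. subst t (s x)) u"
  by (induction u) auto

lemma subst_pres_rel:
  assumes "\<And>r. r \<in> R \<Longrightarrow> subst s r \<sim>[R'] []"
  shows "u \<sim>[R] v \<Longrightarrow> subst s u \<sim>[R'] subst s v"
proof (induction rule: pres_rel.induct)
  case (cancel xs x e ys)
  have "(if e then word_inv (s x) else s x) @ (if \<not> e then word_inv (s x) else s x) \<sim>[R'] []"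
    using append_word_inv_pres_rel_Nil word_inv_append_pres_rel_Nil by auto
  from pres_rel_infix[OF this, of "subst s xs" "subst s ys"] show ?case by simp
next
  case (relator r xs ys)
  from pres_rel_infix[OF assms[OF relator], of "subst s xs" "subst s ys"] show ?case by simp
qed (auto intro: pres_rel.intros)

lemma subst_pres_rel_self:
  assumes "\<And>x. s x \<sim>[R] [(x, False)]"
  shows "subst s u \<sim>[R] u"
proof (induction u)
  case Nil
  then show ?case by (simp add: pres_rel.refl)
next
  case (Cons a u)
  obtain x e where a: "a = (x, e)" by fastforce
  have "(if e then word_inv (s x) else s x) \<sim>[R] [(x, e)]"
    using assms pres_rel_word_inv[OF assms[of x]] by (auto simp: word_inv_def)
  from pres_rel_append[OF this Cons.IH] show ?case using a by simp
qed

definition induced_map :: "('a \<Rightarrow> 'b fword) \<Rightarrow> 'b fword set \<Rightarrow> 'a fword set \<Rightarrow> 'b fword set" where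
  "induced_map s R' A = (\<Union>u\<in>A. pres_rel R' `` {subst s u})"

lemma UN_class_const:
  assumes "\<And>v. u \<sim>[R] v \<Longrightarrow> f v = f u"
  shows "(\<Union>v\<in>pres_rel R `` {u}. f v) = f u"
proof -
  have "(\<Union>v\<in>pres_rel R `` {u}. f v) = (\<Union>v\<in>pres_rel R `` {u}. f u)"
    using assms by (intro SUP_cong) simp_all
  also have "\<dots> = f u"
    using pres_rel.refl[of u R] by blast
  finally show ?thesis .
qed

lemma induced_map_class:
  assumes "\<And>r. r \<in> R \<Longrightarrow> subst s r \<sim>[R'] []"
  shows "induced_map s R' (pres_rel R `` {u}) = pres_rel R' `` {subst s u}"
  unfolding induced_map_def
  by (rule UN_class_const[where f = "\<lambda>v. pres_rel R' `` {subst s v}"], rule pres_rel_class_eq,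
      rule pres_rel.sym) (blast intro: subst_pres_rel[OF assms])

lemma presentation_mult_class:
  "pres_rel R `` {u} \<otimes>\<^bsub>presentation R\<^esub> pres_rel R `` {v} = pres_rel R `` {u @ v}"
proof -
  have right: "(\<Union>v'\<in>pres_rel R `` {v}. pres_rel R `` {u' @ v'}) = pres_rel R `` {u' @ v}" for u'
    by (rule UN_class_const, rule pres_rel_class_eq, rule pres_rel_append_left, erule pres_rel.sym)
  have "(\<Union>u'\<in>pres_rel R `` {u}. pres_rel R `` {u' @ v}) = pres_rel R `` {u @ v}"
    by (rule UN_class_const, rule pres_rel_class_eq, rule pres_rel_append_right, erule pres_rel.sym)
  then show ?thesis
    by (simp add: presentation_def right)
qed

lemma carrier_presentation: "carrier (presentation R) = {pres_rel R `` {u} | u. True}"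
  unfolding presentation_def quotient_def by auto

lemma induced_map_inverse:
  assumes "\<And>r. r \<in> R \<Longrightarrow> subst s r \<sim>[R'] []"
    and "\<And>r. r \<in> R' \<Longrightarrow> subst t r \<sim>[R] []"
    and "\<And>x. subst t (s x) \<sim>[R] [(x, False)]"
  shows "induced_map t R (induced_map s R' (pres_rel R `` {u})) = pres_rel R `` {u}"
proof -
  have "induced_map t R (induced_map s R' (pres_rel R `` {u}))
      = pres_rel R `` {subst t (subst s u)}"
    by (simp add: induced_map_class[OF assms(1)] induced_map_class[OF assms(2)])
  also have "\<dots> = pres_rel R `` {u}"
    unfolding subst_subst by (intro pres_rel_class_eq subst_pres_rel_self assms(3))
  finally show ?thesis .
qed

lemma presentation_iso_by_subst:
  assumes relators: "\<And>r. r \<in> R \<Longrightarrow> subst s r \<sim>[R'] []"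
    and relators': "\<And>r. r \<in> R' \<Longrightarrow> subst t r \<sim>[R] []"
    and inverse: "\<And>x. subst t (s x) \<sim>[R] [(x, False)]"
    and inverse': "\<And>x. subst s (t x) \<sim>[R'] [(x, False)]"
  shows "presentation R \<cong> presentation R'"
proof (rule is_isoI)
  let ?f = "induced_map s R'" and ?g = "induced_map t R"
  note f_class = induced_map_class[OF relators] and g_class = induced_map_class[OF relators']
  have "?f \<in> hom (presentation R) (presentation R')"
    by (rule homI) (auto simp: carrier_presentation f_class presentation_mult_class)
  moreover have "bij_betw ?f (carrier (presentation R)) (carrier (presentation R'))"
  proof (rule bij_betw_byWitness[where f' = ?g])
    show "\<forall>A\<in>carrier (presentation R). ?g (?f A) = A"
      unfolding carrier_presentation
      using induced_map_inverse[OF relators relators' inverse] by blast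
    show "\<forall>A\<in>carrier (presentation R'). ?f (?g A) = A"
      unfolding carrier_presentation
      using induced_map_inverse[OF relators' relators inverse'] by blast
  qed (auto simp: carrier_presentation f_class g_class)
  ultimately show "?f \<in> iso (presentation R) (presentation R')"
    by (simp add: iso_def)
qed

lemma gen_pow_0 [simp]: "gen_pow x 0 = []"
  by (simp add: gen_pow_def)

lemma gen_pow_1: "gen_pow x 1 = [(x, False)]"
  by (simp add: gen_pow_def)

lemma gen_eq_gen_pow: "gen x = gen_pow x 1"
  by (simp add: gen_def gen_pow_def)

lemma word_inv_replicate: "word_inv (replicate m (x, e)) = replicate m (x, \<not> e)"
  by (induction m) (auto simp: word_inv_def replicate_append_same)

lemma word_inv_gen_pow [simp]: "word_inv (gen_pow x k) = gen_pow x (- k)"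
  by (auto simp: gen_pow_def word_inv_replicate)

lemma subst_gen_pow_fixed:
  assumes "s x = gen_pow x 1"
  shows "subst s (gen_pow x k) = gen_pow x k"
proof -
  have "subst s (replicate m (x, e)) = replicate m (x, e)" for m e
    using assms by (induction m) (auto simp: gen_pow_1 word_inv_def)
  then show ?thesis by (simp add: gen_pow_def)
qed

lemma subst_gen_pow_1: "subst s (gen_pow x 1) = s x"
  by (simp add: gen_pow_def)

lemma subst_gen_pow_minus_1: "subst s (gen_pow x (- 1)) = word_inv (s x)"
  by (simp add: gen_pow_def)

lemma gen_pow_succ: "gen_pow x (k + 1) \<sim>[R] gen_pow x k @ [(x, False)]"
proof (cases "0 \<le> k")
  case True
  then have "gen_pow x (k + 1) = gen_pow x k @ [(x, False)]"
    by (simp add: gen_pow_def nat_add_distrib replicate_append_same)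
  then show ?thesis by (simp add: pres_rel.refl)
next
  case False
  then have "nat (- k) = Suc (nat (- (k + 1)))"
    and "gen_pow x (k + 1) = replicate (nat (- (k + 1))) (x, True)"
    by (auto simp: gen_pow_def)
  with False
  have "gen_pow x k @ [(x, False)] = gen_pow x (k + 1) @ [(x, True), (x, \<not> True)] @ []"
    by (simp add: gen_pow_def replicate_append_same[symmetric])
  moreover have "gen_pow x (k + 1) @ [(x, True), (x, \<not> True)] @ [] \<sim>[R] gen_pow x (k + 1) @ []"
    by (rule pres_rel.cancel)
  ultimately show ?thesis by (auto intro: pres_rel.sym)
qed

lemma gen_pow_pred: "gen_pow x (k - 1) \<sim>[R] gen_pow x k @ [(x, True)]"
proof -
  have "gen_pow x k @ [(x, True)] \<sim>[R] gen_pow x (k - 1) @ [(x, False)] @ [(x, True)]"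
    using pres_rel_append_right[OF gen_pow_succ[of x "k - 1" R]] by simp
  also have "gen_pow x (k - 1) @ [(x, False)] @ [(x, True)] \<sim>[R] gen_pow x (k - 1) @ []"
    using pres_rel.cancel[of "gen_pow x (k - 1)" x False "[]" R] by simp
  finally have "gen_pow x k @ [(x, True)] \<sim>[R] gen_pow x (k - 1) @ []" .
  then show ?thesis by (simp add: pres_rel.sym)
qed

lemma gen_pow_add: "gen_pow x a @ gen_pow x b \<sim>[R] gen_pow x (a + b)"
proof (induction b rule: int_induct[where k = 0])
  case base
  then show ?case by (simp add: pres_rel.refl)
next
  case (step1 i)
  have "gen_pow x a @ gen_pow x (i + 1) \<sim>[R] (gen_pow x a @ gen_pow x i) @ [(x, False)]"
    using pres_rel_append_left[OF gen_pow_succ] by simp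
  also have "(gen_pow x a @ gen_pow x i) @ [(x, False)] \<sim>[R] gen_pow x (a + i) @ [(x, False)]"
    using step1(2) by (rule pres_rel_append_right)
  also have "gen_pow x (a + i) @ [(x, False)] \<sim>[R] gen_pow x (a + (i + 1))"
    using gen_pow_succ[of x "a + i" R] by (auto intro: pres_rel.sym simp: add.assoc)
  finally show ?case .
next
  case (step2 i)
  have "gen_pow x a @ gen_pow x (i - 1) \<sim>[R] (gen_pow x a @ gen_pow x i) @ [(x, True)]"
    using pres_rel_append_left[OF gen_pow_pred] by simp
  also have "(gen_pow x a @ gen_pow x i) @ [(x, True)] \<sim>[R] gen_pow x (a + i) @ [(x, True)]"
    using step2(2) by (rule pres_rel_append_right)
  also have "gen_pow x (a + i) @ [(x, True)] \<sim>[R] gen_pow x (a + (i - 1))"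
    using gen_pow_pred[of x "a + i" R] by (auto intro: pres_rel.sym simp: algebra_simps)
  finally show ?case .
qed

definition pow_word :: "('a \<times> int) list \<Rightarrow> 'a fword" where
  "pow_word ps = concat (map (\<lambda>(x, k). gen_pow x k) ps)"

lemma pow_word_simps [simp]:
  "pow_word [] = []"
  "pow_word ((x, k) # ps) = gen_pow x k @ pow_word ps"
  by (simp_all add: pow_word_def)

fun merge_pows :: "('a \<times> int) list \<Rightarrow> ('a \<times> int) list" where
  "merge_pows [] = []"
| "merge_pows [p] = [p]"
| "merge_pows ((x, a) # (y, b) # ps) =
    (if x = y then merge_pows ((x, a + b) # ps) else (x, a) # merge_pows ((y, b) # ps))"

lemma pow_word_merge_pows: "pow_word ps \<sim>[R] pow_word (merge_pows ps)"
proof (induction ps rule: merge_pows.induct)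
  case (3 x a y b ps)
  show ?case
  proof (cases "x = y")
    case True
    have "pow_word ((x, a) # (y, b) # ps) \<sim>[R] pow_word ((x, a + b) # ps)"
      using pres_rel_append_right[OF gen_pow_add[of x a b R]] True by simp
    with "3.IH"(1)[OF True] True show ?thesis by (auto intro: pres_rel.trans)
  next
    case False
    with "3.IH"(2)[OF False] show ?thesis by (simp add: pres_rel_append_left)
  qed
qed (simp_all add: pres_rel.refl)

lemma pow_word_pres_rel_if_merge_pows_eq:
  "merge_pows ps = merge_pows qs \<Longrightarrow> pow_word ps \<sim>[R] pow_word qs"
  by (metis pow_word_merge_pows pres_rel.sym pres_rel.trans)

definition braid3_relator :: "two_gens fword" where
  "braid3_relator = relation (gen GA @ gen GB @ gen GA) (gen GB @ gen GA @ gen GB)"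

definition G_n_relator :: "int \<Rightarrow> two_gens fword" where
  "G_n_relator n = relation (gen GA @ gen GB @ gen GA) (gen GB @ gen_pow GA (n + 1) @ gen GB)"

lemma braid3_eq: "braid3 = presentation {braid3_relator}"
  by (simp add: braid3_def braid3_relator_def)

lemma G_n_eq: "G_n n = presentation {G_n_relator n}"
  by (simp add: G_n_def G_n_relator_def)

definition shear :: "int \<Rightarrow> two_gens \<Rightarrow> two_gens fword" where
  "shear k x = (case x of GA \<Rightarrow> gen_pow GA 1 | GB \<Rightarrow> gen_pow GB 1 @ gen_pow GA k)"

lemma shear_simps [simp]:
  "shear k GA = gen_pow GA 1"
  "shear k GB = gen_pow GB 1 @ gen_pow GA k"
  by (simp_all add: shear_def)

lemma subst_shear_shear:
  assumes "k + l = 0"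
  shows "subst (shear k) (shear l x) \<sim>[R] [(x, False)]"
proof (cases x)
  case GA
  then show ?thesis by (simp add: gen_pow_1 pres_rel.refl)
next
  case GB
  have "pow_word [(GB, 1), (GA, k), (GA, l)] \<sim>[R] pow_word [(GB, 1), (GA, 0)]"
    by (rule pow_word_pres_rel_if_merge_pows_eq) (simp add: assms)
  then show ?thesis
    using GB by (simp add: subst_gen_pow_fixed subst_gen_pow_1 gen_pow_1)
qed

lemma subst_shear_G_n_relator: "subst (shear (- n)) (G_n_relator n) \<sim>[{braid3_relator}] []"
proof -
  have "subst (shear (- n)) (G_n_relator n)
      = pow_word [(GA, 1), (GB, 1), (GA, - n), (GA, 1), (GA, n),
                  (GB, - 1), (GA, - (n + 1)), (GA, n), (GB, - 1)]"
    by (simp add: G_n_relator_def relation_def gen_eq_gen_pow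
        subst_gen_pow_fixed subst_gen_pow_1 subst_gen_pow_minus_1)
  also have "\<dots> \<sim>[{braid3_relator}]
      pow_word [(GA, 1), (GB, 1), (GA, 1), (GB, - 1), (GA, - 1), (GB, - 1)]"
    by (rule pow_word_pres_rel_if_merge_pows_eq) simp
  also have "pow_word [(GA, 1), (GB, 1), (GA, 1), (GB, - 1), (GA, - 1), (GB, - 1)]
      = braid3_relator"
    by (simp add: braid3_relator_def relation_def gen_eq_gen_pow)
  also have "braid3_relator \<sim>[{braid3_relator}] []"
    by (simp add: relator_pres_rel_Nil)
  finally show ?thesis .
qed

lemma subst_shear_braid3_relator: "subst (shear n) braid3_relator \<sim>[{G_n_relator n}] []"
proof -
  have "subst (shear n) braid3_relator
      = pow_word [(GA, 1), (GB, 1), (GA, n), (GA, 1), (GA, - n),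
                  (GB, - 1), (GA, - 1), (GA, - n), (GB, - 1)]"
    by (simp add: braid3_relator_def relation_def gen_eq_gen_pow
        subst_gen_pow_fixed subst_gen_pow_1 subst_gen_pow_minus_1)
  also have "\<dots> \<sim>[{G_n_relator n}]
      pow_word [(GA, 1), (GB, 1), (GA, 1), (GB, - 1), (GA, - (n + 1)), (GB, - 1)]"
    by (rule pow_word_pres_rel_if_merge_pows_eq) simp
  also have "pow_word [(GA, 1), (GB, 1), (GA, 1), (GB, - 1), (GA, - (n + 1)), (GB, - 1)]
      = G_n_relator n"
    by (simp add: G_n_relator_def relation_def gen_eq_gen_pow)
  also have "G_n_relator n \<sim>[{G_n_relator n}] []"
    by (simp add: relator_pres_rel_Nil)
  finally show ?thesis .
qed

theorem mainTheorem8: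
  fixes n :: int
  shows "G_n n \<cong> braid3"
  unfolding G_n_eq braid3_eq
  by (rule presentation_iso_by_subst[where s = "shear (- n)" and t = "shear n"])
    (auto intro: subst_shear_shear subst_shear_G_n_relator subst_shear_braid3_relator)

end
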